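(* For every integer $p\ge0$ and every complex $z$ with $e^z\ne1$, $$\sum_{n\ge0}\mathcal{B}_{n,p}\frac{z^n}{n!}=\frac{p!\,\exp(e^z-1)}{(e^z-1)^p}-\sum_{k=1}^{p}\frac{p^{\underline k}}{(e^z-1)^k}.$$
   Context: $p^{\underline k}=p(p-1)\cdots(p-k+1)$ is the falling factorial. For an integer $p\ge0$, the $p$-Bell numbers $\mathcal{B}_{n,p}$ are defined by $\sum_{n\ge0}\mathcal{B}_{n,p}\frac{z^n}{n!}=\sum_{n\ge0}\binom{n+p}{p}^{-1}\frac{(e^z-1)^n}{n!}$ (an entire function of $z$ whose Taylor series is the left side). *)

theory Defs
  imports "HOL-Analysis.Analysis"
begin

definition falling_fact :: "nat \<Rightarrow> nat \<Rightarrow> nat" where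
  "falling_fact p k = (\<Prod>i<k. (p - i))"

text \<open>The entire function whose Taylor series defines the p-Bell numbers:
  F_p(z) = sum_n binom(n+p,p)^(-1) (e^z-1)^n / n!.\<close>
definition pBell_egf :: "nat \<Rightarrow> complex \<Rightarrow> complex" where
  "pBell_egf p z = (\<Sum>n. (exp z - 1) ^ n / (of_nat ((n + p) choose p) * fact n))"

definition pBell :: "nat \<Rightarrow> nat \<Rightarrow> complex" where
  "pBell n p = (deriv ^^ n) (pBell_egf p) 0"

end

theory Submission
  imports Defs "HOL-Complex_Analysis.Complex_Analysis"
begin

text \<open>Since \<open>binom(n+p,p) n! = (n+p)!/p!\<close>, the entire function
  \<open>inv_binomial_exp p\<close>, \<open>G\<^sub>p(w) = \<Sum>\<^sub>n w\<^sup>n / (binom(n+p,p) n!)\<close> equals \<open>p! w\<^sup>-\<^sup>p (e\<^sup>w - \<Sum>\<^sub>i\<^sub><\<^sub>p w\<^sup>i/i!)\<close>;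
  multiplying out the truncated exponential gives the falling-factorial terms, because
  \<open>p!/(p-k)!\<close> is the falling factorial of \<open>p\<close> of length \<open>k\<close>. The exponential generating
  function of the \<open>p\<close>-Bell numbers is the entire function \<open>G\<^sub>p(e\<^sup>z - 1)\<close>, so its Taylor
  series at \<open>0\<close> converges to it everywhere.\<close>

definition inv_binomial_exp :: "nat \<Rightarrow> complex \<Rightarrow> complex" where
  "inv_binomial_exp p w = (\<Sum>n. w ^ n / (of_nat ((n + p) choose p) * fact n))"

lemma fact_mult_fact_mult_binomial:
  "fact p * fact n * of_nat ((n + p) choose p) = (fact (n + p) :: 'a :: semiring_char_0)"
proof -
  have "fact p * fact n * ((n + p) choose p) = (fact (n + p) :: nat)"
    using binomial_fact_lemma[of p "n + p"] by simp
  then show ?thesis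
    by (metis of_nat_fact of_nat_mult)
qed

lemma falling_fact_mult_fact: "k \<le> p \<Longrightarrow> falling_fact p k * fact (p - k) = fact p"
proof (induction k)
  case 0
  then show ?case by (simp add: falling_fact_def)
next
  case (Suc k)
  have "p - k = Suc (p - Suc k)"
    using Suc.prems by simp
  then have "falling_fact p (Suc k) * fact (p - Suc k) = falling_fact p k * fact (p - k)"
    by (simp add: falling_fact_def algebra_simps)
  also have "\<dots> = fact p"
    using Suc by simp
  finally show ?case .
qed

lemma summable_inv_binomial_exp:
  "summable (\<lambda>n. w ^ n / (of_nat ((n + p) choose p) * fact n :: complex))"
proof (rule summable_comparison_test[OF _ summable_exp[of "norm w"]])
  have "norm (w ^ n / (of_nat ((n + p) choose p) * fact n :: complex))
          \<le> inverse (fact n) * norm w ^ n" for n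
  proof -
    have "(1 :: real) \<le> of_nat ((n + p) choose p)"
      by (simp add: Suc_leI)
    then have "norm w ^ n / (of_nat ((n + p) choose p) * fact n) \<le> norm w ^ n / fact n"
      by (intro divide_left_mono) auto
    then show ?thesis
      by (simp add: norm_divide norm_mult norm_power field_simps)
  qed
  then show "\<exists>N. \<forall>n\<ge>N. norm (w ^ n / (of_nat ((n + p) choose p) * fact n :: complex))
               \<le> inverse (fact n) * norm w ^ n"
    by blast
qed

lemma inv_binomial_exp_holomorphic: "inv_binomial_exp p holomorphic_on A"
proof (rule holomorphic_on_balls_imp_entire'[where c = 0])
  fix r :: real
  show "inv_binomial_exp p holomorphic_on ball 0 r"
  proof (rule power_series_holomorphic[where a = "\<lambda>n. 1 / (of_nat ((n + p) choose p) * fact n)"])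
    fix w :: complex
    show "(\<lambda>n. 1 / (of_nat ((n + p) choose p) * fact n) * (w - 0) ^ n) sums inv_binomial_exp p w"
      using summable_sums[OF summable_inv_binomial_exp] by (simp add: inv_binomial_exp_def)
  qed
qed

lemma inv_binomial_exp_eq_exp_tail:
  assumes "w \<noteq> 0"
  shows "inv_binomial_exp p w = fact p / w ^ p * (exp w - (\<Sum>i<p. w ^ i / fact i))"
proof -
  have "(\<lambda>n. w ^ n / fact n) sums exp w"
    using exp_converges[of w] by (simp add: scaleR_conv_of_real field_simps)
  then have "(\<lambda>n. w ^ (n + p) / fact (n + p)) sums (exp w - (\<Sum>i<p. w ^ i / fact i))"
    using sums_iff_shift[of "\<lambda>n. w ^ n / fact n" p] by simp
  then have "(\<lambda>n. fact p / w ^ p * (w ^ (n + p) / fact (n + p))) sums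
               (fact p / w ^ p * (exp w - (\<Sum>i<p. w ^ i / fact i)))"
    by (rule sums_mult)
  moreover have "fact p / w ^ p * (w ^ (n + p) / fact (n + p))
                   = w ^ n / (of_nat ((n + p) choose p) * fact n)" for n
    using assms fact_mult_fact_mult_binomial[of p n, where 'a = complex]
    by (simp add: power_add field_simps mult_ac)
  ultimately show ?thesis
    by (simp add: inv_binomial_exp_def sums_iff)
qed

lemma sum_falling_fact_div_power:
  assumes "w \<noteq> 0"
  shows "(\<Sum>k=1..p. of_nat (falling_fact p k) / w ^ k :: complex)
           = (\<Sum>i<p. fact p / w ^ p * (w ^ i / fact i))"
proof (rule sum.reindex_bij_witness[where i = "\<lambda>k. p - k" and j = "\<lambda>i. p - i"])
  fix k assume k: "k \<in> {1..p}"
  have "(of_nat (falling_fact p k) :: complex) * fact (p - k) = fact p"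
    using falling_fact_mult_fact[of k p] k by (metis atLeastAtMost_iff of_nat_fact of_nat_mult)
  moreover have "(w ^ p :: complex) = w ^ k * w ^ (p - k)"
    using k by (simp flip: power_add)
  ultimately show "fact p / w ^ p * (w ^ (p - k) / fact (p - k)) = of_nat (falling_fact p k) / w ^ k"
    using assms by (simp add: field_simps)
qed auto

lemma inv_binomial_exp_closed_form:
  assumes "w \<noteq> 0"
  shows "inv_binomial_exp p w
           = fact p * exp w / w ^ p - (\<Sum>k=1..p. of_nat (falling_fact p k) / w ^ k)"
proof -
  have "inv_binomial_exp p w
          = fact p / w ^ p * exp w - (\<Sum>i<p. fact p / w ^ p * (w ^ i / fact i))"
    using assms by (simp add: inv_binomial_exp_eq_exp_tail right_diff_distrib sum_distrib_left)
  also have "(\<Sum>i<p. fact p / w ^ p * (w ^ i / fact i))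
               = (\<Sum>k=1..p. of_nat (falling_fact p k) / w ^ k)"
    by (rule sum_falling_fact_div_power[OF assms, symmetric])
  finally show ?thesis
    by simp
qed

theorem mainTheorem5:
  fixes p :: nat and z :: complex
  assumes "exp z \<noteq> 1"
  shows "(\<lambda>n. pBell n p * z ^ n / fact n) sums
           (fact p * exp (exp z - 1) / (exp z - 1) ^ p
            - (\<Sum>k=1..p. of_nat (falling_fact p k) / (exp z - 1) ^ k))"
proof -
  have egf: "pBell_egf p = inv_binomial_exp p \<circ> (\<lambda>z. exp z - 1)"
    by (simp add: fun_eq_iff pBell_egf_def inv_binomial_exp_def)
  have "pBell_egf p holomorphic_on ball 0 (norm z + 1)"
    unfolding egf by (intro holomorphic_on_compose inv_binomial_exp_holomorphic holomorphic_intros)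
  then have "(\<lambda>n. (deriv ^^ n) (pBell_egf p) 0 / fact n * (z - 0) ^ n) sums pBell_egf p z"
    by (rule holomorphic_power_series) simp
  moreover have "pBell_egf p z = inv_binomial_exp p (exp z - 1)"
    by (simp add: egf)
  ultimately show ?thesis
    using assms by (simp add: pBell_def inv_binomial_exp_closed_form)
qed

end
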